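(* Let $f$ be twice differentiable with $f''\neq 0$ (i.e.\ $f''>0$ throughout or $f''<0$ throughout) on an interval $I$, and let $s$ be the extended difference quotient $s(u,v)=\frac{f(u)-f(v)}{u-v}$ for $u\neq v$, $s(u,u)=f'(u)$. Consider a shock particle $(x_i,u_i^-,u_i^+)$ with neighbors $(x_{i-1},u_{i-1}^-,u_{i-1}^+)$ and $(x_{i+1},u_{i+1}^-,u_{i+1}^+)$, where $x_{i-1}<x_i<x_{i+1}$ and all values lie in $I$, evolving according to \[ \dot x_i = s(u_i^-,u_i^+),\quad \dot u_i^- = \bigl(s(u_i^-,u_i^+)-f'(u_i^-)\bigr)\frac{f'(u_{i-1}^+)-f'(u_i^-)}{x_{i-1}-x_i}\frac{1}{f''(u_i^-)},\quad \dot u_i^+ = \bigl(s(u_i^-,u_i^+)-f'(u_i^+)\bigr)\frac{f'(u_{i+1}^-)-f'(u_i^+)}{x_{i+1}-x_i}\frac{1}{f''(u_i^+)}. \] Then, as $u_i^+-u_i^-\to 0$, this motion reduces to the motion of a characteristic particle, namely $\dot x_i = f'(u_i)$, $\dot u_i = 0$: that is, if $u_i^-,u_i^+\to u\in I$ (with the neighbors and positions fixed), the right-hand sides converge to $f'(u)$, $0$ and $0$ respectively.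
   Context: A shock particle is a triple $(x_i,u_i^-,u_i^+)$: a position $x_i$ with left state $u_i^-$ and right state $u_i^+$, required to satisfy the Oleinik entropy condition $f'(u_i^-)\ge f'(u_i^+)$. A shock particle with $u_i^-=u_i^+=u_i$ is called characteristic. This concerns the scalar conservation law $u_t+(f(u))_x=0$. *)

theory Defs
  imports "HOL-Analysis.Analysis"
begin

definition ext_diff_quot :: "(real \<Rightarrow> real) \<Rightarrow> (real \<Rightarrow> real) \<Rightarrow> real \<Rightarrow> real \<Rightarrow> real" where
  "ext_diff_quot f f' u v = (if u = v then f' u else (f u - f v) / (u - v))"

end

theory Submission
  imports Defs
begin

text \<open>By the mean value theorem the extended difference quotient s(a,b) equals f' at a point
between a and b, so continuity of f' makes s jointly continuous on the diagonal with s(u,u) = f' u.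
The two remaining right-hand sides are then products of a factor s(a,b) - f'(a) (resp. - f'(b))
tending to f' u - f' u = 0 with factors that stay convergent because f'' is continuous and nonzero;
the entropy condition f'(a) \<ge> f'(b) only restricts the set of approach, and the neighbour data
enter only as constants.\<close>

lemma ext_diff_quot_commute: "ext_diff_quot f f' a b = ext_diff_quot f f' b a"
  by (simp add: ext_diff_quot_def) (metis minus_diff_eq minus_divide_divide)

lemma ext_diff_quot_mean_value:
  fixes f f' :: "real \<Rightarrow> real"
  assumes I: "is_interval I"
    and f': "\<And>y. y \<in> I \<Longrightarrow> (f has_real_derivative f' y) (at y within I)"
    and ab: "a \<in> I" "b \<in> I"
  shows "\<exists>c \<in> closed_segment a b. ext_diff_quot f f' a b = f' c"
proof -
  have ordered: "\<exists>c \<in> closed_segment p q. ext_diff_quot f f' p q = f' c"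
    if pq: "p < q" "p \<in> I" "q \<in> I" for p q
  proof -
    have sub: "{p..q} \<subseteq> I"
      using I pq unfolding is_interval_1 by (meson atLeastAtMost_iff subsetI)
    have "(f has_derivative (\<lambda>h. f' y * h)) (at y within {p..q})" if "p \<le> y" "y \<le> q" for y
    proof -
      have "y \<in> I"
        using sub that by auto
      then have "(f has_real_derivative f' y) (at y within {p..q})"
        using has_field_derivative_subset[OF f' sub] by blast
      then show ?thesis
        by (simp add: has_field_derivative_def)
    qed
    from mvt_simple[OF \<open>p < q\<close> this]
    obtain c where c: "c \<in> {p<..<q}" and mv: "f q - f p = f' c * (q - p)"
      by blast
    have "ext_diff_quot f f' p q = (f q - f p) / (q - p)"
      unfolding ext_diff_quot_commute[of f f' p] using \<open>p < q\<close> by (simp add: ext_diff_quot_def)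
    also have "\<dots> = f' c"
      using mv \<open>p < q\<close> by simp
    finally show ?thesis
      using c \<open>p < q\<close> by (intro bexI[of _ c]) (auto simp: closed_segment_eq_real_ivl)
  qed
  consider "a = b" | "a < b" | "b < a"
    by linarith
  then show ?thesis
  proof cases
    case 1
    then show ?thesis
      by (simp add: ext_diff_quot_def)
  next
    case 2
    then show ?thesis
      using ordered ab by blast
  next
    case 3
    then show ?thesis
      using ordered[of b a] ab by (simp add: ext_diff_quot_commute[of f f' a] closed_segment_commute)
  qed
qed

lemma tendsto_ext_diff_quot_diagonal:
  fixes f f' :: "real \<Rightarrow> real"
  assumes I: "is_interval I"
    and f': "\<And>y. y \<in> I \<Longrightarrow> (f has_real_derivative f' y) (at y within I)"
    and cont: "continuous (at u within I) f'"
  shows "((\<lambda>p. ext_diff_quot f f' (fst p) (snd p)) \<longlongrightarrow> f' u) (at (u, u) within I \<times> I)"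
  unfolding Lim_within
proof (intro allI impI)
  fix e :: real
  assume "e > 0"
  with cont obtain d where "d > 0" and d: "\<And>y. y \<in> I \<Longrightarrow> dist y u < d \<Longrightarrow> dist (f' y) (f' u) < e"
    unfolding continuous_within_eps_delta by blast
  have "dist (ext_diff_quot f f' a b) (f' u) < e"
    if ab: "a \<in> I" "b \<in> I" and near: "dist (a, b) (u, u) < d" for a b
  proof -
    obtain c where c: "c \<in> closed_segment a b" and s: "ext_diff_quot f f' a b = f' c"
      using ext_diff_quot_mean_value[OF I f' ab] by blast
    have "c \<in> I"
      using c ab I is_interval_convex convex_contains_segment by blast
    moreover have "dist a u < d" "dist b u < d"
      using near dist_fst_le[of "(a, b)" "(u, u)"] dist_snd_le[of "(a, b)" "(u, u)"] by auto
    then have "dist c u < d"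
      using c by (auto simp: closed_segment_eq_real_ivl dist_real_def split: if_splits)
    ultimately show ?thesis
      using d s by simp
  qed
  with \<open>d > 0\<close> show "\<exists>d>0. \<forall>p\<in>I \<times> I. 0 < dist p (u, u) \<and> dist p (u, u) < d \<longrightarrow>
      dist (ext_diff_quot f f' (fst p) (snd p)) (f' u) < e"
    by force
qed

lemma tendsto_fst_within_Times:
  assumes "continuous_on I g" "u \<in> I" "v \<in> J"
  shows "((\<lambda>p. g (fst p)) \<longlongrightarrow> g u) (at (u, v) within I \<times> J)"
proof -
  have "continuous_on (I \<times> J) (\<lambda>p. g (fst p))"
    by (rule continuous_on_compose2[OF assms(1) continuous_on_fst]) auto
  with assms(2,3) show ?thesis
    unfolding continuous_on_def by fastforce
qed

lemma tendsto_snd_within_Times: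
  assumes "continuous_on J g" "u \<in> I" "v \<in> J"
  shows "((\<lambda>p. g (snd p)) \<longlongrightarrow> g v) (at (u, v) within I \<times> J)"
proof -
  have "continuous_on (I \<times> J) (\<lambda>p. g (snd p))"
    by (rule continuous_on_compose2[OF assms(1) continuous_on_snd]) auto
  with assms(2,3) show ?thesis
    unfolding continuous_on_def by fastforce
qed

lemma tendsto_zero_times_convergent_quotients:
  fixes g h k :: "'a \<Rightarrow> real"
  assumes "(g \<longlongrightarrow> 0) F" "(h \<longlongrightarrow> c) F" "(k \<longlongrightarrow> d) F" "d \<noteq> 0"
  shows "((\<lambda>p. g p * ((a - h p) / e) * (1 / k p)) \<longlongrightarrow> 0) F"
proof -
  have "((\<lambda>p. (a - h p) / e) \<longlongrightarrow> (a - c) / e) F"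
    unfolding divide_inverse using assms(2) by (intro tendsto_intros)
  moreover have "((\<lambda>p. 1 / k p) \<longlongrightarrow> 1 / d) F"
    using assms(3,4) by (rule tendsto_divide[OF tendsto_const])
  ultimately have "((\<lambda>p. g p * ((a - h p) / e) * (1 / k p)) \<longlongrightarrow> 0 * ((a - c) / e) * (1 / d)) F"
    using assms(1) by (intro tendsto_mult)
  then show ?thesis
    by simp
qed

theorem lemma1:
  fixes f f' f'' :: "real \<Rightarrow> real" and I :: "real set"
    and xl x xr ul ur u :: real
  assumes I: "is_interval I"
    and f': "\<And>y. y \<in> I \<Longrightarrow> (f has_real_derivative f' y) (at y within I)"
    and f'': "\<And>y. y \<in> I \<Longrightarrow> (f' has_real_derivative f'' y) (at y within I)"
    and cont: "continuous_on I f''"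
    and sgn: "(\<forall>y\<in>I. f'' y > 0) \<or> (\<forall>y\<in>I. f'' y < 0)"
    and pos: "xl < x" "x < xr"
    and nb: "ul \<in> I" "ur \<in> I"
    and u: "u \<in> I"
  shows
    "((\<lambda>(a, b). ext_diff_quot f f' a b) \<longlongrightarrow> f' u)
       (at (u, u) within {(a, b). a \<in> I \<and> b \<in> I \<and> f' a \<ge> f' b})
     \<and> ((\<lambda>(a, b). (ext_diff_quot f f' a b - f' a) * ((f' ul - f' a) / (xl - x)) * (1 / f'' a))
          \<longlongrightarrow> 0)
       (at (u, u) within {(a, b). a \<in> I \<and> b \<in> I \<and> f' a \<ge> f' b})
     \<and> ((\<lambda>(a, b). (ext_diff_quot f f' a b - f' b) * ((f' ur - f' b) / (xr - x)) * (1 / f'' b))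
          \<longlongrightarrow> 0)
       (at (u, u) within {(a, b). a \<in> I \<and> b \<in> I \<and> f' a \<ge> f' b})"
proof -
  have entropy_sub: "{(a, b). a \<in> I \<and> b \<in> I \<and> f' a \<ge> f' b} \<subseteq> I \<times> I"
    by auto
  have cont': "continuous_on I f'"
    using f'' DERIV_continuous continuous_on_eq_continuous_within by blast
  have "f'' u \<noteq> 0"
    using sgn u by force
  have s: "((\<lambda>p. ext_diff_quot f f' (fst p) (snd p)) \<longlongrightarrow> f' u) (at (u, u) within I \<times> I)"
    using tendsto_ext_diff_quot_diagonal[OF I f'] cont' u
    by (simp add: continuous_on_eq_continuous_within)
  note lims = tendsto_fst_within_Times[OF cont' u u] tendsto_snd_within_Times[OF cont' u u]
    tendsto_fst_within_Times[OF cont u u] tendsto_snd_within_Times[OF cont u u]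
  have "((\<lambda>p. (ext_diff_quot f f' (fst p) (snd p) - f' (fst p))
      * ((f' ul - f' (fst p)) / (xl - x)) * (1 / f'' (fst p))) \<longlongrightarrow> 0) (at (u, u) within I \<times> I)"
    using tendsto_diff[OF s lims(1)] lims(1,3) \<open>f'' u \<noteq> 0\<close>
    by (intro tendsto_zero_times_convergent_quotients) simp_all
  moreover have "((\<lambda>p. (ext_diff_quot f f' (fst p) (snd p) - f' (snd p))
      * ((f' ur - f' (snd p)) / (xr - x)) * (1 / f'' (snd p))) \<longlongrightarrow> 0) (at (u, u) within I \<times> I)"
    using tendsto_diff[OF s lims(2)] lims(2,4) \<open>f'' u \<noteq> 0\<close>
    by (intro tendsto_zero_times_convergent_quotients) simp_all
  ultimately show ?thesis
    using s tendsto_within_subset[OF _ entropy_sub] unfolding split_beta' by blast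
qed

end
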